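(* Let $N\ge1$, $m>1$, $\alpha,\beta\in\mathbb R$ with $N+\alpha-m>0$ and $\beta-\alpha+1>0$; let $s_0\ge0$, $\lambda>0$, $\wp>m-1$, and let $u$ be a positive solution of $$-(r^{N+\alpha-1}|u'(r)|^{m-2}u'(r))'=\lambda r^{N+\beta-1}u^{\wp}(r),\ r\in(s_0,\infty),\qquad u(s_0)=1,\quad u'(s_0)\le0.$$ Let $\varrho=\frac{N+\alpha-m}{m-1}$ and $U_\varrho(r)=ru'(r)+\varrho u(r)$. Then there are positive constants $C_1,C_2$ depending only on $N,\alpha,\beta,\lambda,\wp,m$ such that for all $r\in(s_0,\infty)$ $$r^{N+\beta}u^{\wp+1}(r)\le\begin{cases} C_1\, r^{-\frac{m(N+\beta)-(N+\alpha-m)(\wp+1)}{\wp-m+1}} & \text{if } N+\beta\ne\varrho\wp,\\ C_2\, r^{-\frac{(N+\alpha-m)(\wp+1)-(m-1)(N+\beta)}{m-1}} & \text{if } N+\beta=\varrho\wp.\end{cases}$$ Moreover, for all $r\in(s_0,\infty)$, $$\lambda\Big(\frac{N+\beta}{\wp+1}-\frac{N+\alpha-m}{m}\Big)\int_{s_0}^r s^{N+\beta-1}u^{\wp+1}(s)\,ds = -\frac{m-1}{m}r^{N+\alpha-1}|u'(r)|^{m-1}U_\varrho(r)+\frac{m-1}{m}s_0^{N+\alpha-1}|u'(s_0)|^{m-1}U_\varrho(s_0)+\frac{\lambda}{\wp+1}\big[r^{N+\beta}u^{\wp+1}(r)-s_0^{N+\beta}\big].$$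
   Context: A positive solution is a positive function $u\in C^1$ on $[s_0,\infty)$ satisfying the differential equation on $(s_0,\infty)$ (in the sense that $r^{N+\alpha-1}|u'|^{m-2}u'$ is $C^1$ there) together with the initial conditions. *)

theory Defs
  imports "HOL-Analysis.Analysis"
begin

text \<open>The flux  r^(N+alpha-1) |u'(r)|^(m-2) u'(r), with |0|^(m-2)*0 = 0.\<close>
definition flux :: "real \<Rightarrow> real \<Rightarrow> real \<Rightarrow> real \<Rightarrow> real \<Rightarrow> real" where
  "flux N \<alpha> m r v = r powr (N + \<alpha> - 1) * \<bar>v\<bar> powr (m - 2) * v"

definition positive_solution ::
  "real \<Rightarrow> real \<Rightarrow> real \<Rightarrow> real \<Rightarrow> real \<Rightarrow> real \<Rightarrow> real
     \<Rightarrow> (real \<Rightarrow> real) \<Rightarrow> (real \<Rightarrow> real) \<Rightarrow> bool" where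
  "positive_solution N m \<alpha> \<beta> lam p s0 u u' \<longleftrightarrow>
     (\<forall>r\<ge>s0. (u has_real_derivative u' r) (at r within {s0..})) \<and>
     continuous_on {s0..} u' \<and>
     (\<forall>r\<ge>s0. u r > 0) \<and>
     (\<exists>\<phi>'. (\<forall>r>s0. ((\<lambda>t. flux N \<alpha> m t (u' t)) has_real_derivative \<phi>' r) (at r)) \<and>
            continuous_on {s0<..} \<phi>' \<and>
            (\<forall>r>s0. - \<phi>' r = lam * r powr (N + \<beta> - 1) * u r powr p)) \<and>
     u s0 = 1 \<and> u' s0 \<le> 0"

end

theory Submission
  imports Defs
begin

(* Put psi = - r^(N+alpha-1) |u'|^(m-2) u'.  The equation says psi' = lam r^(N+beta-1) u^p > 0,
   and psi(s0) >= 0 because u'(s0) <= 0; hence psi > 0 and u' < 0 on (s0, oo).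
   For A >= s0, psi grows on [A, 3A/2] by at least ~ A^(N+beta) u(3A/2)^p, while u drops on
   [3A/2, 2A] by at least ~ A (psi(3A/2) / A^(N+alpha-1))^(1/(m-1)); as u stays positive, this drop
   is less than u(3A/2).  Combining the two gives u(3A/2) A^theta < const with
   theta = (beta-alpha+m)/(p-m+1), hence u(r) <= K r^(-theta) with K depending only on the
   parameters (for r < 2 s0 one uses u <= 1 and the same argument at A = s0, where u(s0) = 1, to
   bound s0).  Raising this to the power p+1 gives the first estimate: in both cases of the
   statement the exponent equals N + beta - theta (p+1).
   The identity is the fundamental theorem of calculus applied to the energy on its right-hand
   side, which is differentiable although u' need not be, because r |u'| psi = r^(-rho) psi^(m/(m-1)). *)

lemma DERIV_le_imp_diff_le:
  fixes f f' :: "real \<Rightarrow> real"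
  assumes "a \<le> b" "continuous_on {a..b} f"
    and "\<And>x. a < x \<Longrightarrow> x < b \<Longrightarrow> (f has_real_derivative f' x) (at x)"
    and "\<And>x. a < x \<Longrightarrow> x < b \<Longrightarrow> f' x \<le> K"
  shows "f b - f a \<le> K * (b - a)"
proof -
  have "K * a - f a \<le> K * b - f b"
  proof (rule DERIV_nonneg_imp_increasing_open[OF assms(1), of "\<lambda>x. K * x - f x", simplified])
    show "\<exists>y. ((\<lambda>x. K * x - f x) has_real_derivative y) (at x) \<and> 0 \<le> y" if "a < x" "x < b" for x
      using assms(3,4)[OF that] by (intro exI[of _ "K - f' x"]) (auto intro!: derivative_eq_intros)
    show "continuous_on {a..b} (\<lambda>x. K * x - f x)"
      using assms(2) by (intro continuous_intros)
  qed
  then show ?thesis by (simp add: algebra_simps)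
qed

lemma DERIV_ge_imp_diff_ge:
  fixes f f' :: "real \<Rightarrow> real"
  assumes "a \<le> b" "continuous_on {a..b} f"
    and "\<And>x. a < x \<Longrightarrow> x < b \<Longrightarrow> (f has_real_derivative f' x) (at x)"
    and "\<And>x. a < x \<Longrightarrow> x < b \<Longrightarrow> K \<le> f' x"
  shows "K * (b - a) \<le> f b - f a"
proof -
  have "(\<lambda>x. - f x) b - (\<lambda>x. - f x) a \<le> (- K) * (b - a)"
    by (rule DERIV_le_imp_diff_le[where f'="\<lambda>x. - f' x"])
       (use assms in \<open>auto intro!: derivative_eq_intros continuous_intros\<close>)
  then show ?thesis by simp
qed

lemma continuous_signed_powr:
  fixes q :: real
  assumes "q > -1"
  shows "continuous_on UNIV (\<lambda>v::real. \<bar>v\<bar> powr q * v)"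
proof -
  have "isCont (\<lambda>v::real. \<bar>v\<bar> powr q * v) x" for x
  proof (cases "x = 0")
    case False
    show ?thesis unfolding isCont_def
      by (rule tendsto_mult[OF tendsto_powr'[OF tendsto_rabs[OF tendsto_ident_at] tendsto_const]])
        (use False in auto)
  next
    case True
    have abs_eq: "\<bar>\<bar>v\<bar> powr q * v\<bar> = \<bar>v\<bar> powr (q + 1)" for v :: real
    proof -
      have "\<bar>\<bar>v\<bar> powr q * v\<bar> = \<bar>v\<bar> * \<bar>v\<bar> powr q"
        by (simp add: abs_mult mult.commute)
      also have "\<dots> = \<bar>v\<bar> powr (q + 1)"
        using powr_mult_base[of "\<bar>v\<bar>" q] by (simp only: add.commute abs_ge_zero)
      finally show ?thesis .
    qed
    have lim: "((\<lambda>v::real. \<bar>v\<bar> powr (q + 1)) \<longlongrightarrow> 0) (at 0)"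
      using tendsto_zero_powrI[OF tendsto_rabs_zero[OF tendsto_ident_at[of "0::real" UNIV]] tendsto_const, of "q + 1"]
        assms by simp
    have "((\<lambda>v::real. \<bar>v\<bar> powr q * v) \<longlongrightarrow> 0) (at 0)"
      by (rule tendsto_rabs_zero_cancel) (simp only: abs_eq lim)
    then show ?thesis using True by (simp add: isCont_def)
  qed
  then show ?thesis by (simp add: continuous_on_eq_continuous_at)
qed

lemma min_powr_le_powr_between:
  fixes x t y g :: real
  assumes "0 < x" "x \<le> t" "t \<le> y"
  shows "min (x powr g) (y powr g) \<le> t powr g"
proof (cases "g \<ge> 0")
  case True
  then have "x powr g \<le> t powr g" using assms by (intro powr_mono2) auto
  then show ?thesis by linarith
next
  case False
  then have "y powr g \<le> t powr g" using assms by (intro powr_mono2') auto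
  then show ?thesis by linarith
qed

locale weighted_lane_emden =
  fixes N :: nat and m \<alpha> \<beta> lam p :: real
  assumes m_gt_1: "m > 1"
    and N_\<alpha>_gt_m: "real N + \<alpha> - m > 0"
    and \<beta>_\<alpha>_gt: "\<beta> - \<alpha> + 1 > 0"
    and lam_pos: "lam > 0"
    and p_gt: "p > m - 1"
begin

definition \<rho> :: real where
  "\<rho> = (real N + \<alpha> - m) / (m - 1)"

definition decay_rate :: real where
  "decay_rate = (\<beta> - \<alpha> + m) / (p - m + 1)"

(* The factor min 1 ((3/2) powr (N+beta-1)) bounds t^(N+beta-1) / A^(N+beta-1) for t in [A, 3A/2]. *)
definition step_bound :: real where
  "step_bound = (2 powr (real N + \<alpha> - 1 + m) /
     (lam * min 1 ((3 / 2) powr (real N + \<beta> - 1)))) powr (1 / (p - m + 1))"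

(* The last factor comes from the lower bound 1 / (1 + 2^((N+alpha-1)/(m-1))) on u(3 s0 / 2). *)
definition decay_bound :: real where
  "decay_bound = 2 powr decay_rate * step_bound * (1 + 2 powr ((real N + \<alpha> - 1) / (m - 1)))"

lemma decay_rate_pos: "decay_rate > 0"
  using \<beta>_\<alpha>_gt m_gt_1 p_gt by (simp add: decay_rate_def)

lemma step_bound_pos: "step_bound > 0"
  using lam_pos by (simp add: step_bound_def min_def)

lemma decay_bound_pos: "decay_bound > 0"
  using step_bound_pos by (simp add: decay_bound_def add_pos_pos)

lemma decay_exponent_eq:
  "- (m * (N + \<beta>) - (N + \<alpha> - m) * (p + 1)) / (p - m + 1) = N + \<beta> - decay_rate * (p + 1)"
  using p_gt by (simp add: decay_rate_def field_simps)

lemma decay_rate_critical: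
  assumes "N + \<beta> = \<rho> * p"
  shows "decay_rate = \<rho>"
proof -
  have "\<rho> * (m - 1) = N + \<alpha> - m" using m_gt_1 by (simp add: \<rho>_def)
  then have "\<beta> - \<alpha> + m = \<rho> * (p - m + 1)" using assms by (simp add: algebra_simps)
  then show ?thesis using p_gt by (simp add: decay_rate_def)
qed

lemma decay_exponent_eq_critical:
  assumes "N + \<beta> = \<rho> * p"
  shows "- ((N + \<alpha> - m) * (p + 1) - (m - 1) * (N + \<beta>)) / (m - 1) = N + \<beta> - decay_rate * (p + 1)"
  using m_gt_1 by (simp add: decay_rate_critical[OF assms] \<rho>_def field_simps)

end

locale weighted_lane_emden_solution = weighted_lane_emden +
  fixes s0 :: real and u u' :: "real \<Rightarrow> real"
  assumes s0_nonneg: "s0 \<ge> 0"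
    and solution: "positive_solution N m \<alpha> \<beta> lam p s0 u u'"
begin

lemma u_has_derivative_within: "r \<ge> s0 \<Longrightarrow> (u has_real_derivative u' r) (at r within {s0..})"
  using solution by (simp add: positive_solution_def)

lemma continuous_on_u': "continuous_on {s0..} u'"
  using solution by (simp add: positive_solution_def)

lemma u_pos: "r \<ge> s0 \<Longrightarrow> u r > 0"
  using solution by (simp add: positive_solution_def)

lemma u_s0: "u s0 = 1"
  using solution by (simp add: positive_solution_def)

lemma u'_s0: "u' s0 \<le> 0"
  using solution by (simp add: positive_solution_def)

lemma continuous_on_u: "continuous_on {s0..} u"
  using u_has_derivative_within by (intro DERIV_continuous_on) auto

lemma u_has_derivative: "r > s0 \<Longrightarrow> (u has_real_derivative u' r) (at r)"
proof -
  assume "r > s0"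
  then have "at r within {s0..} = at r"
    by (intro at_within_interior) (simp add: interior_real_atLeast)
  then show ?thesis using u_has_derivative_within[of r] \<open>r > s0\<close> by simp
qed

definition \<psi> :: "real \<Rightarrow> real" where
  "\<psi> r = - flux N \<alpha> m r (u' r)"

lemma \<psi>_has_derivative:
  assumes "r > s0"
  shows "(\<psi> has_real_derivative lam * r powr (N + \<beta> - 1) * u r powr p) (at r)"
proof -
  from solution obtain \<phi>' where
    "\<forall>r>s0. ((\<lambda>t. flux N \<alpha> m t (u' t)) has_real_derivative \<phi>' r) (at r)"
    "\<forall>r>s0. - \<phi>' r = lam * r powr (N + \<beta> - 1) * u r powr p"
    unfolding positive_solution_def by blast
  with assms DERIV_minus[of "\<lambda>t. flux N \<alpha> m t (u' t)" "\<phi>' r" r] show ?thesis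
    unfolding \<psi>_def by auto
qed

lemma continuous_on_\<psi>: "continuous_on {s0..} \<psi>"
proof -
  have power: "continuous_on {s0..} (\<lambda>r. r powr (N + \<alpha> - 1))"
    using s0_nonneg N_\<alpha>_gt_m m_gt_1
    by (intro continuous_on_powr' continuous_intros) auto
  have signed_power: "continuous_on {s0..} (\<lambda>r. \<bar>u' r\<bar> powr (m - 2) * u' r)"
    using continuous_on_compose2[OF continuous_signed_powr continuous_on_u', of "m - 2"] m_gt_1
    by auto
  show ?thesis
    unfolding \<psi>_def flux_def mult.assoc
    by (rule continuous_on_minus[OF continuous_on_mult[OF power signed_power]])
qed

lemma \<psi>_strict_mono:
  assumes "s0 \<le> x" "x < y"
  shows "\<psi> x < \<psi> y"
proof (rule DERIV_pos_imp_increasing_open[OF assms(2)])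
  fix t assume "x < t" "t < y"
  with assms have "t > s0" by simp
  moreover have "lam * t powr (N + \<beta> - 1) * u t powr p > 0"
    using lam_pos u_pos[of t] \<open>t > s0\<close> s0_nonneg by simp
  ultimately show "\<exists>d. (\<psi> has_real_derivative d) (at t) \<and> 0 < d"
    using \<psi>_has_derivative by blast
next
  show "continuous_on {x..y} \<psi>"
    using assms by (intro continuous_on_subset[OF continuous_on_\<psi>]) auto
qed

lemma \<psi>_mono: "s0 \<le> x \<Longrightarrow> x \<le> y \<Longrightarrow> \<psi> x \<le> \<psi> y"
  using \<psi>_strict_mono by (cases "x = y") (auto simp: less_imp_le)

lemma \<psi>_s0_nonneg: "\<psi> s0 \<ge> 0"
  using u'_s0 by (simp add: \<psi>_def flux_def mult_nonneg_nonpos)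

lemma \<psi>_nonneg: "r \<ge> s0 \<Longrightarrow> \<psi> r \<ge> 0"
  using \<psi>_s0_nonneg \<psi>_mono[of s0 r] by simp

lemma \<psi>_pos: "r > s0 \<Longrightarrow> \<psi> r > 0"
  using \<psi>_s0_nonneg \<psi>_strict_mono[of s0 r] by simp

lemma u'_neg: "r > s0 \<Longrightarrow> u' r < 0"
proof (rule ccontr)
  assume "r > s0" "\<not> u' r < 0"
  then have "r powr (N + \<alpha> - 1) * \<bar>u' r\<bar> powr (m - 2) * u' r \<ge> 0" by simp
  with \<psi>_pos[OF \<open>r > s0\<close>] show False by (simp add: \<psi>_def flux_def)
qed

lemma u'_nonpos: "r \<ge> s0 \<Longrightarrow> u' r \<le> 0"
  using u'_s0 u'_neg[of r] by (cases "r = s0") auto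

lemma \<psi>_eq: "r \<ge> s0 \<Longrightarrow> \<psi> r = r powr (N + \<alpha> - 1) * \<bar>u' r\<bar> powr (m - 1)"
proof -
  assume "r \<ge> s0"
  then have "- (\<bar>u' r\<bar> powr (m - 2) * u' r) = \<bar>u' r\<bar> * \<bar>u' r\<bar> powr (m - 2)"
    using u'_nonpos[of r] by simp
  also have "\<dots> = \<bar>u' r\<bar> powr (m - 1)"
    using powr_mult_base[of "\<bar>u' r\<bar>" "m - 2"] by simp
  finally show ?thesis
    unfolding \<psi>_def flux_def by (metis mult.assoc mult_minus_right)
qed

lemma abs_u'_eq:
  assumes "r > s0"
  shows "\<bar>u' r\<bar> = (\<psi> r / r powr (N + \<alpha> - 1)) powr (1 / (m - 1))"
proof -
  have "r > 0" using assms s0_nonneg by simp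
  then have "\<psi> r / r powr (N + \<alpha> - 1) = \<bar>u' r\<bar> powr (m - 1)"
    using \<psi>_eq[of r] assms by simp
  then show ?thesis using m_gt_1 by (simp add: powr_powr)
qed

lemma u_antimono: "s0 \<le> x \<Longrightarrow> x \<le> y \<Longrightarrow> u y \<le> u x"
  using DERIV_le_imp_diff_le[of x y u u' 0] continuous_on_subset[OF continuous_on_u, of "{x..y}"]
    u_has_derivative u'_neg by (force intro: less_imp_le)

lemma u_le_1: "r \<ge> s0 \<Longrightarrow> u r \<le> 1"
  using u_antimono[of s0 r] u_s0 by simp

section \<open>Decay\<close>

lemma u_decrease_ge:
  assumes "s0 \<le> x" "x < y"
  shows "(y - x) * (\<psi> x / y powr (N + \<alpha> - 1)) powr (1 / (m - 1)) \<le> u x - u y"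
proof -
  let ?L = "(\<psi> x / y powr (N + \<alpha> - 1)) powr (1 / (m - 1))"
  have "u y - u x \<le> (- ?L) * (y - x)"
  proof (rule DERIV_le_imp_diff_le[where f' = u'])
    show "continuous_on {x..y} u"
      using assms by (intro continuous_on_subset[OF continuous_on_u]) auto
  next
    fix t assume t: "x < t" "t < y"
    with assms have "t > s0" "t > 0" using s0_nonneg by auto
    then show "(u has_real_derivative u' t) (at t)" by (intro u_has_derivative)
    have "\<psi> x / y powr (N + \<alpha> - 1) \<le> \<psi> t / t powr (N + \<alpha> - 1)"
    proof (rule frac_le)
      show "\<psi> x \<le> \<psi> t" using assms t by (intro \<psi>_mono) auto
      show "t powr (N + \<alpha> - 1) \<le> y powr (N + \<alpha> - 1)"
        using t \<open>t > 0\<close> N_\<alpha>_gt_m m_gt_1 by (intro powr_mono2) auto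
    qed (use \<psi>_nonneg \<open>t > s0\<close> \<open>t > 0\<close> in auto)
    then have "?L \<le> \<bar>u' t\<bar>"
      unfolding abs_u'_eq[OF \<open>t > s0\<close>] using assms \<psi>_nonneg m_gt_1 s0_nonneg t
      by (intro powr_mono2) auto
    then show "u' t \<le> - ?L" using u'_neg[OF \<open>t > s0\<close>] by simp
  qed (use assms in simp)
  then show ?thesis by (simp add: algebra_simps)
qed

lemma u_decrease_le:
  assumes "s0 \<le> x" "0 < x" "x < y"
  shows "u x - u y \<le> (y - x) * (\<psi> y / x powr (N + \<alpha> - 1)) powr (1 / (m - 1))"
proof -
  let ?M = "(\<psi> y / x powr (N + \<alpha> - 1)) powr (1 / (m - 1))"
  have "(- ?M) * (y - x) \<le> u y - u x"
  proof (rule DERIV_ge_imp_diff_ge[where f' = u'])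
    show "continuous_on {x..y} u"
      using assms by (intro continuous_on_subset[OF continuous_on_u]) auto
  next
    fix t assume t: "x < t" "t < y"
    with assms have "t > s0" by simp
    then show "(u has_real_derivative u' t) (at t)" by (rule u_has_derivative)
    have "\<psi> t / t powr (N + \<alpha> - 1) \<le> \<psi> y / x powr (N + \<alpha> - 1)"
    proof (rule frac_le)
      show "\<psi> t \<le> \<psi> y" using assms t by (intro \<psi>_mono) auto
      show "x powr (N + \<alpha> - 1) \<le> t powr (N + \<alpha> - 1)"
        using t assms N_\<alpha>_gt_m m_gt_1 by (intro powr_mono2) auto
    qed (use \<psi>_nonneg assms t in auto)
    then have "\<bar>u' t\<bar> \<le> ?M"
      unfolding abs_u'_eq[OF \<open>t > s0\<close>] using \<psi>_nonneg \<open>t > s0\<close> m_gt_1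
      by (intro powr_mono2) auto
    then show "- ?M \<le> u' t" by simp
  qed (use assms in simp)
  then show ?thesis by (simp add: algebra_simps)
qed

lemma \<psi>_increase_ge:
  assumes "s0 \<le> x" "0 < x" "x < y"
  shows "lam * min (x powr (N + \<beta> - 1)) (y powr (N + \<beta> - 1)) * u y powr p * (y - x) \<le> \<psi> y - \<psi> x"
proof (rule DERIV_ge_imp_diff_ge)
  show "continuous_on {x..y} \<psi>"
    using assms by (intro continuous_on_subset[OF continuous_on_\<psi>]) auto
next
  fix t assume t: "x < t" "t < y"
  with assms have "t > s0" by simp
  then show "(\<psi> has_real_derivative lam * t powr (N + \<beta> - 1) * u t powr p) (at t)"
    by (rule \<psi>_has_derivative)
  have "min (x powr (N + \<beta> - 1)) (y powr (N + \<beta> - 1)) \<le> t powr (N + \<beta> - 1)"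
    using assms t by (intro min_powr_le_powr_between) auto
  moreover have "u y powr p \<le> u t powr p"
    using assms t u_pos[of y] u_antimono[of t y] p_gt m_gt_1 by (intro powr_mono2) auto
  ultimately show "lam * min (x powr (N + \<beta> - 1)) (y powr (N + \<beta> - 1)) * u y powr p
      \<le> lam * t powr (N + \<beta> - 1) * u t powr p"
    using lam_pos by (simp add: mult.assoc mult_mono)
qed (use assms in simp)

lemma u_three_halves_gt:
  assumes "s0 \<le> A" "0 < A"
  shows "A / 2 * (\<psi> (3 * A / 2) / (2 * A) powr (N + \<alpha> - 1)) powr (1 / (m - 1)) < u (3 * A / 2)"
  using u_decrease_ge[of "3 * A / 2" "2 * A"] u_pos[of "2 * A"] assms by simp

lemma \<psi>_three_halves_upper:
  assumes "s0 \<le> A" "0 < A"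
  shows "\<psi> (3 * A / 2) < (2 * A) powr (N + \<alpha> - 1) * (2 * u (3 * A / 2) / A) powr (m - 1)"
proof -
  let ?Q = "\<psi> (3 * A / 2) / (2 * A) powr (N + \<alpha> - 1)"
  have "?Q powr (1 / (m - 1)) < 2 * u (3 * A / 2) / A"
    using u_three_halves_gt[OF assms] assms by (simp add: field_simps)
  then have "(?Q powr (1 / (m - 1))) powr (m - 1) < (2 * u (3 * A / 2) / A) powr (m - 1)"
    using m_gt_1 by (intro powr_less_mono2) auto
  moreover have "(?Q powr (1 / (m - 1))) powr (m - 1) = ?Q"
    using m_gt_1 \<psi>_nonneg[of "3 * A / 2"] assms by (simp add: powr_powr)
  ultimately have "?Q < (2 * u (3 * A / 2) / A) powr (m - 1)" by simp
  then show ?thesis using assms by (simp add: pos_divide_less_eq mult.commute)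
qed

lemma \<psi>_three_halves_lower:
  assumes "s0 \<le> A" "0 < A"
  shows "lam * min 1 ((3 / 2) powr (N + \<beta> - 1)) * A powr (N + \<beta> - 1) * u (3 * A / 2) powr p * (A / 2)
    \<le> \<psi> (3 * A / 2)"
proof -
  have "min (A powr (N + \<beta> - 1)) ((3 * A / 2) powr (N + \<beta> - 1))
      = A powr (N + \<beta> - 1) * min 1 ((3 / 2) powr (N + \<beta> - 1))"
  proof -
    have "(3 * A / 2) powr (N + \<beta> - 1) = A powr (N + \<beta> - 1) * (3 / 2) powr (N + \<beta> - 1)"
      using assms powr_mult[of A "3 / 2" "N + \<beta> - 1"] by (simp add: mult.commute)
    then show ?thesis by (simp add: min_mult_distrib_left)
  qed
  then show ?thesis
    using \<psi>_increase_ge[of A "3 * A / 2"] \<psi>_nonneg[of A] assms by (simp add: algebra_simps)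
qed

lemma u_three_halves_powr_bound:
  assumes "s0 \<le> A" "0 < A"
  shows "lam * min 1 ((3 / 2) powr (N + \<beta> - 1)) * (u (3 * A / 2) powr (p - m + 1) * A powr (\<beta> - \<alpha> + m))
    < 2 powr (N + \<alpha> - 1 + m)"
proof -
  define v where "v = u (3 * A / 2)"
  define a where "a = real N + \<alpha> - 1"
  define c where "c = min 1 ((3 / 2) powr (real N + \<beta> - 1))"
  define Z where "Z = A powr (a - (m - 1)) * v powr (m - 1)"
  have v: "v > 0" unfolding v_def using assms by (intro u_pos) simp
  have Z: "Z > 0" unfolding Z_def using v assms by simp
  have A_split: "A powr (N + \<beta> - 1) * A = A powr (\<beta> - \<alpha> + m) * A powr (a - (m - 1))"
    using powr_mult_base[of A "real N + \<beta> - 1"] assms unfolding a_def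
    by (simp add: powr_add[symmetric] ac_simps)
  have v_split: "v powr p = v powr (p - m + 1) * v powr (m - 1)"
    using v by (simp add: powr_add[symmetric])
  have "lam * c * (v powr (p - m + 1) * A powr (\<beta> - \<alpha> + m)) * Z
      = 2 * (lam * c * A powr (N + \<beta> - 1) * v powr p * (A / 2))"
  proof -
    have "2 * (lam * c * A powr (N + \<beta> - 1) * v powr p * (A / 2))
        = lam * c * (A powr (N + \<beta> - 1) * A) * v powr p"
      by simp
    also have "\<dots> = lam * c * (v powr (p - m + 1) * A powr (\<beta> - \<alpha> + m)) * Z"
      unfolding A_split v_split Z_def by (simp add: algebra_simps)
    finally show ?thesis ..
  qed
  also have "\<dots> < 2 * ((2 * A) powr a * (2 * v / A) powr (m - 1))"
    using \<psi>_three_halves_lower[OF assms] \<psi>_three_halves_upper[OF assms]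
    unfolding v_def a_def c_def by linarith
  also have "(2 * A) powr a * (2 * v / A) powr (m - 1) = 2 powr (a + m - 1) * Z"
    using assms v unfolding Z_def by (simp add: powr_mult powr_divide powr_diff powr_add field_simps)
  finally have "lam * c * (v powr (p - m + 1) * A powr (\<beta> - \<alpha> + m)) * Z < 2 * 2 powr (a + m - 1) * Z"
    by simp
  then have "lam * c * (v powr (p - m + 1) * A powr (\<beta> - \<alpha> + m)) < 2 powr (a + m)"
    using Z by (simp add: powr_add[symmetric] powr_mult_base)
  then show ?thesis unfolding v_def a_def c_def .
qed

lemma u_step_decay:
  assumes "s0 \<le> A" "0 < A"
  shows "u (3 * A / 2) * A powr decay_rate < step_bound"
proof -
  define v where "v = u (3 * A / 2)"
  define c where "c = lam * min 1 ((3 / 2) powr (real N + \<beta> - 1))"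
  define q where "q = p - m + 1"
  have v: "v > 0" unfolding v_def using assms by (intro u_pos) simp
  have c: "c > 0" unfolding c_def using lam_pos by (simp add: min_def)
  have q: "q > 0" unfolding q_def using p_gt by simp
  have "(v * A powr decay_rate) powr q = v powr q * A powr (\<beta> - \<alpha> + m)"
    using v assms q by (simp add: powr_mult powr_powr decay_rate_def q_def)
  then have "(v * A powr decay_rate) powr q < 2 powr (N + \<alpha> - 1 + m) / c"
    using u_three_halves_powr_bound[OF assms] c unfolding v_def c_def q_def
    by (simp add: pos_less_divide_eq mult.commute mult.left_commute)
  then have "((v * A powr decay_rate) powr q) powr (1 / q) < (2 powr (N + \<alpha> - 1 + m) / c) powr (1 / q)"
    using q by (intro powr_less_mono2) auto
  then show ?thesis
    using v assms q unfolding step_bound_def c_def q_def v_def by (simp add: powr_powr)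
qed

lemma u_three_halves_s0_lower:
  assumes "s0 > 0"
  shows "1 < (1 + 2 powr ((N + \<alpha> - 1) / (m - 1))) * u (3 * s0 / 2)"
proof -
  define v where "v = u (3 * s0 / 2)"
  define P where "P = \<psi> (3 * s0 / 2)"
  define a where "a = real N + \<alpha> - 1"
  define e where "e = 1 / (m - 1)"
  have "(P / s0 powr a) powr e = (2 powr a * (P / (2 * s0) powr a)) powr e"
    using assms by (simp add: powr_mult)
  also have "\<dots> = (2 powr a) powr e * (P / (2 * s0) powr a) powr e"
    by (rule powr_mult)
  also have "\<dots> = 2 powr (a / (m - 1)) * (P / (2 * s0) powr a) powr e"
    by (simp add: powr_powr e_def)
  finally have "1 - v \<le> 2 powr (a / (m - 1)) * (s0 / 2 * (P / (2 * s0) powr a) powr e)"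
    using u_decrease_le[of s0 "3 * s0 / 2"] u_s0 assms
    unfolding v_def P_def a_def e_def by (simp add: algebra_simps)
  also have "\<dots> < 2 powr (a / (m - 1)) * v"
    using u_three_halves_gt[of s0] assms unfolding v_def P_def a_def e_def by simp
  finally show ?thesis
    unfolding v_def a_def by (simp add: algebra_simps)
qed

lemma s0_powr_bound:
  assumes "s0 > 0"
  shows "s0 powr decay_rate < step_bound * (1 + 2 powr ((N + \<alpha> - 1) / (m - 1)))"
proof -
  let ?c = "1 + 2 powr ((N + \<alpha> - 1) / (m - 1))"
  have "s0 powr decay_rate < s0 powr decay_rate * (?c * u (3 * s0 / 2))"
    using u_three_halves_s0_lower[OF assms] assms by simp
  also have "\<dots> = ?c * (u (3 * s0 / 2) * s0 powr decay_rate)"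
    by (simp add: algebra_simps)
  also have "\<dots> < ?c * step_bound"
    using u_step_decay[of s0] assms by (intro mult_strict_left_mono) (auto intro: add_pos_pos)
  finally show ?thesis by (simp add: mult.commute)
qed

lemma u_decay:
  assumes "r > s0"
  shows "u r \<le> decay_bound * r powr (- decay_rate)"
proof -
  have r: "r > 0" using assms s0_nonneg by simp
  have factor: "step_bound \<le> step_bound * (1 + 2 powr ((N + \<alpha> - 1) / (m - 1)))"
    using step_bound_pos by simp
  have "u r * r powr decay_rate < decay_bound"
  proof (cases "2 * s0 \<le> r")
    case True
    define A where "A = r / 2"
    have A: "s0 \<le> A" "0 < A" using True r unfolding A_def by simp_all
    have "u r * r powr decay_rate \<le> u (3 * A / 2) * r powr decay_rate"
      using u_antimono[of "3 * A / 2" r] A unfolding A_def by (intro mult_right_mono) auto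
    also have "\<dots> = 2 powr decay_rate * (u (3 * A / 2) * A powr decay_rate)"
      using r unfolding A_def by (simp add: powr_divide)
    also have "\<dots> < 2 powr decay_rate * step_bound"
      using u_step_decay[OF A] by simp
    also have "\<dots> \<le> decay_bound"
      using factor unfolding decay_bound_def by (simp add: mult.assoc)
    finally show ?thesis .
  next
    case False
    then have "s0 > 0" using assms by simp
    have "u r * r powr decay_rate \<le> r powr decay_rate"
      using u_le_1[of r] u_pos[of r] assms by (intro mult_left_le_one_le) auto
    also have "\<dots> \<le> (2 * s0) powr decay_rate"
      using False r decay_rate_pos by (intro powr_mono2) auto
    also have "\<dots> = 2 powr decay_rate * s0 powr decay_rate"
      using \<open>s0 > 0\<close> by (simp add: powr_mult)
    also have "\<dots> < decay_bound"
      using s0_powr_bound[OF \<open>s0 > 0\<close>] unfolding decay_bound_def by (simp add: mult.assoc)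
    finally show ?thesis .
  qed
  then show ?thesis
    using r by (simp add: powr_minus divide_simps)
qed

lemma weighted_power_decay:
  assumes "r > s0"
  shows "r powr (N + \<beta>) * u r powr (p + 1) \<le> decay_bound powr (p + 1) * r powr (N + \<beta> - decay_rate * (p + 1))"
proof -
  have r: "r > 0" using assms s0_nonneg by simp
  have "u r powr (p + 1) \<le> (decay_bound * r powr (- decay_rate)) powr (p + 1)"
    using u_decay[OF assms] u_pos[of r] assms p_gt m_gt_1 by (intro powr_mono2) auto
  also have "\<dots> = decay_bound powr (p + 1) * r powr (- decay_rate * (p + 1))"
    using decay_bound_pos r by (simp add: powr_mult powr_powr)
  finally show ?thesis
    using r by (simp add: mult_left_mono powr_diff powr_minus divide_simps mult.commute)
qed

lemma weighted_power_bound: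
  assumes "r > s0"
  shows "r powr (N + \<beta>) * u r powr (p + 1) \<le>
    (if N + \<beta> \<noteq> \<rho> * p
     then decay_bound powr (p + 1) * r powr (- (m * (N + \<beta>) - (N + \<alpha> - m) * (p + 1)) / (p - m + 1))
     else decay_bound powr (p + 1) * r powr (- ((N + \<alpha> - m) * (p + 1) - (m - 1) * (N + \<beta>)) / (m - 1)))"
proof (cases "N + \<beta> = \<rho> * p")
  case True
  then have "\<not> (N + \<beta> \<noteq> \<rho> * p)" by simp
  show ?thesis
    unfolding if_not_P[OF \<open>\<not> (N + \<beta> \<noteq> \<rho> * p)\<close>] decay_exponent_eq_critical[OF True]
    by (rule weighted_power_decay[OF assms])
next
  case False
  show ?thesis
    unfolding if_P[OF False] decay_exponent_eq by (rule weighted_power_decay[OF assms])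
qed

section \<open>Pohozaev identity\<close>

lemma r_abs_u'_eq:
  assumes "r > s0"
  shows "r powr (- \<rho>) * \<psi> r powr (1 / (m - 1)) = r * \<bar>u' r\<bar>"
proof -
  have r: "r > 0" using assms s0_nonneg by simp
  have "- \<rho> = 1 - (N + \<alpha> - 1) * (1 / (m - 1))"
    using m_gt_1 by (simp add: \<rho>_def field_simps)
  then have "r powr (- \<rho>) = r / r powr ((N + \<alpha> - 1) * (1 / (m - 1)))"
    using r by (simp add: powr_diff)
  then show ?thesis
    unfolding abs_u'_eq[OF assms] by (simp add: powr_divide powr_powr)
qed

lemma r_abs_u'_\<psi>_eq:
  assumes "r > s0"
  shows "r * \<bar>u' r\<bar> * \<psi> r = r powr (- \<rho>) * \<psi> r powr (m / (m - 1))"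
proof -
  have "m / (m - 1) = 1 / (m - 1) + 1" using m_gt_1 by (simp add: field_simps)
  then have "\<psi> r powr (m / (m - 1)) = \<psi> r powr (1 / (m - 1)) * \<psi> r"
    using \<psi>_pos[OF assms] by (simp add: powr_add)
  then show ?thesis using r_abs_u'_eq[OF assms] by (simp add: mult.assoc)
qed

lemma r_abs_u'_\<psi>_has_derivative:
  assumes "r > s0"
  shows "((\<lambda>x. x * \<bar>u' x\<bar> * \<psi> x) has_real_derivative
    m / (m - 1) * r * \<bar>u' r\<bar> * (lam * r powr (N + \<beta> - 1) * u r powr p) - \<rho> * \<bar>u' r\<bar> * \<psi> r) (at r)"
proof -
  have r: "r > 0" using assms s0_nonneg by simp
  let ?\<psi>' = "lam * r powr (N + \<beta> - 1) * u r powr p"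
  have power_rule: "r powr (- \<rho> - 1) * \<psi> r powr (m / (m - 1)) = \<bar>u' r\<bar> * \<psi> r"
    using r_abs_u'_\<psi>_eq[OF assms] r by (simp add: powr_diff field_simps)
  have chain_rule: "r powr (- \<rho>) * \<psi> r powr (m / (m - 1) - real 1) = r * \<bar>u' r\<bar>"
  proof -
    have "m / (m - 1) - real 1 = 1 / (m - 1)" using m_gt_1 by (simp add: field_simps)
    then show ?thesis using r_abs_u'_eq[OF assms] by simp
  qed
  have "((\<lambda>x. x powr (- \<rho>) * \<psi> x powr (m / (m - 1))) has_real_derivative
      m / (m - 1) * r * \<bar>u' r\<bar> * ?\<psi>' - \<rho> * \<bar>u' r\<bar> * \<psi> r) (at r)"
  proof (rule DERIV_cong[OF DERIV_mult[OF has_real_derivative_powr[OF r]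
        DERIV_fun_powr[OF \<psi>_has_derivative[OF assms] \<psi>_pos[OF assms]]]])
    have "- \<rho> * r powr (- \<rho> - 1) * \<psi> r powr (m / (m - 1))
        + m / (m - 1) * \<psi> r powr (m / (m - 1) - real 1) * ?\<psi>' * r powr (- \<rho>)
      = - \<rho> * (r powr (- \<rho> - 1) * \<psi> r powr (m / (m - 1)))
        + m / (m - 1) * ?\<psi>' * (r powr (- \<rho>) * \<psi> r powr (m / (m - 1) - real 1))"
      by (simp only: ac_simps)
    also have "\<dots> = m / (m - 1) * r * \<bar>u' r\<bar> * ?\<psi>' - \<rho> * \<bar>u' r\<bar> * \<psi> r"
      unfolding power_rule chain_rule by (simp add: algebra_simps)
    finally show "- \<rho> * r powr (- \<rho> - 1) * \<psi> r powr (m / (m - 1))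
        + m / (m - 1) * \<psi> r powr (m / (m - 1) - real 1) * ?\<psi>' * r powr (- \<rho>)
      = m / (m - 1) * r * \<bar>u' r\<bar> * ?\<psi>' - \<rho> * \<bar>u' r\<bar> * \<psi> r" .
  qed
  then show ?thesis
    by (rule has_field_derivative_transform_within_open[where S = "{s0<..}"])
      (use assms r_abs_u'_\<psi>_eq in auto)
qed

definition pohozaev_energy :: "real \<Rightarrow> real" where
  "pohozaev_energy r =
     - (m - 1) / m * r powr (N + \<alpha> - 1) * \<bar>u' r\<bar> powr (m - 1) * (r * u' r + \<rho> * u r)
     + lam / (p + 1) * (r powr (N + \<beta>) * u r powr (p + 1))"

lemma pohozaev_energy_eq_\<psi>:
  assumes "r > s0"
  shows "pohozaev_energy r = - (m - 1) / m * (\<rho> * (\<psi> r * u r) - r * \<bar>u' r\<bar> * \<psi> r)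
    + lam / (p + 1) * (r powr (N + \<beta>) * u r powr (p + 1))"
proof -
  define w where "w = - u' r"
  have "\<bar>u' r\<bar> = w" "u' r = - w" using u'_neg[OF assms] unfolding w_def by simp_all
  then show ?thesis
    unfolding pohozaev_energy_def \<psi>_eq[OF less_imp_le[OF assms]] using m_gt_1 by (simp add: field_simps)
qed

lemma pohozaev_energy_has_derivative:
  assumes "r > s0"
  shows "(pohozaev_energy has_real_derivative
    lam * ((N + \<beta>) / (p + 1) - (N + \<alpha> - m) / m) * (r powr (N + \<beta> - 1) * u r powr (p + 1))) (at r)"
proof -
  have r: "r > 0" using assms s0_nonneg by simp
  have ur: "u r > 0" using u_pos assms by simp
  have nz: "p + 1 \<noteq> 0" "m \<noteq> 0" "m - 1 \<noteq> 0" using p_gt m_gt_1 by auto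
  note derivs = \<psi>_has_derivative[OF assms] u_has_derivative[OF assms]
    r_abs_u'_\<psi>_has_derivative[OF assms] has_real_derivative_powr[OF r, of "N + \<beta>"]
    DERIV_fun_powr[OF u_has_derivative[OF assms] ur, of "p + 1"]
  have r_split: "r powr (N + \<beta>) = r powr (N + \<beta> - 1) * r"
    using powr_mult_base[of r "N + \<beta> - 1"] r by (simp add: mult.commute)
  have u_split: "u r powr (p + 1) = u r powr p * u r"
    using ur by (simp add: powr_add)
  define w where "w = - u' r"
  have w: "u' r = - w" "\<bar>u' r\<bar> = w" using u'_neg[OF assms] unfolding w_def by simp_all
  have "((\<lambda>x. - (m - 1) / m * (\<rho> * (\<psi> x * u x) - x * \<bar>u' x\<bar> * \<psi> x)
      + lam / (p + 1) * (x powr (N + \<beta>) * u x powr (p + 1))) has_real_derivative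
    lam * ((N + \<beta>) / (p + 1) - (N + \<alpha> - m) / m) * (r powr (N + \<beta> - 1) * u r powr (p + 1))) (at r)"
    apply (rule DERIV_cong[OF DERIV_add[OF DERIV_cmult[OF DERIV_diff[OF DERIV_cmult[OF DERIV_mult[OF derivs(1,2)]] derivs(3)]]
        DERIV_cmult[OF DERIV_mult[OF derivs(4,5)]]]])
    apply (unfold r_split u_split w(2))
    using nz by (simp add: w(1) \<rho>_def divide_simps) (simp add: algebra_simps)
  then show ?thesis
    by (rule has_field_derivative_transform_within_open[where S = "{s0<..}"])
      (use assms pohozaev_energy_eq_\<psi> in auto)
qed

lemma continuous_on_pohozaev_energy: "continuous_on {s0..} pohozaev_energy"
proof -
  have "continuous_on {s0..} (\<lambda>r. r powr (N + \<alpha> - 1))"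
    using s0_nonneg N_\<alpha>_gt_m m_gt_1 by (intro continuous_on_powr' continuous_on_id continuous_on_const) auto
  moreover have "continuous_on {s0..} (\<lambda>r. \<bar>u' r\<bar> powr (m - 1))"
    using m_gt_1 by (intro continuous_on_powr' continuous_on_rabs continuous_on_u' continuous_on_const) auto
  moreover have "continuous_on {s0..} (\<lambda>r. r powr (N + \<beta>))"
    using s0_nonneg N_\<alpha>_gt_m \<beta>_\<alpha>_gt m_gt_1
    by (intro continuous_on_powr' continuous_on_id continuous_on_const) auto
  moreover have "continuous_on {s0..} (\<lambda>r. u r powr (p + 1))"
    using u_pos by (intro continuous_on_powr' continuous_on_u continuous_on_const) (force intro: less_imp_le)
  ultimately show ?thesis
    unfolding pohozaev_energy_def
    by (intro continuous_on_add continuous_on_mult continuous_on_const continuous_on_id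
        continuous_on_u continuous_on_u') auto
qed

lemma integral_eq_pohozaev_energy_diff:
  assumes "r > s0"
  shows "lam * ((N + \<beta>) / (p + 1) - (N + \<alpha> - m) / m) *
      integral {s0..r} (\<lambda>s. s powr (N + \<beta> - 1) * u s powr (p + 1))
    = pohozaev_energy r - pohozaev_energy s0"
proof -
  have "((\<lambda>s. lam * ((N + \<beta>) / (p + 1) - (N + \<alpha> - m) / m) * (s powr (N + \<beta> - 1) * u s powr (p + 1)))
      has_integral pohozaev_energy r - pohozaev_energy s0) {s0..r}"
  proof (rule fundamental_theorem_of_calculus_interior)
    show "continuous_on {s0..r} pohozaev_energy"
      by (rule continuous_on_subset[OF continuous_on_pohozaev_energy]) auto
    fix x assume "x \<in> {s0<..<r}"
    then show "(pohozaev_energy has_vector_derivative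
        lam * ((N + \<beta>) / (p + 1) - (N + \<alpha> - m) / m) * (x powr (N + \<beta> - 1) * u x powr (p + 1))) (at x)"
      using pohozaev_energy_has_derivative[of x] by (simp add: has_real_derivative_iff_has_vector_derivative)
  qed (use assms in simp)
  then show ?thesis
    by (simp add: integral_unique integral_mult_right[symmetric] del: integral_mult_right)
qed

lemma pohozaev_identity:
  assumes "r > s0"
  shows "lam * ((N + \<beta>) / (p + 1) - (N + \<alpha> - m) / m) *
      integral {s0..r} (\<lambda>s. s powr (N + \<beta> - 1) * u s powr (p + 1))
    = - (m - 1) / m * r powr (N + \<alpha> - 1) * \<bar>u' r\<bar> powr (m - 1) * (r * u' r + \<rho> * u r)
      + (m - 1) / m * s0 powr (N + \<alpha> - 1) * \<bar>u' s0\<bar> powr (m - 1) * (s0 * u' s0 + \<rho> * u s0)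
      + lam / (p + 1) * (r powr (N + \<beta>) * u r powr (p + 1) - s0 powr (N + \<beta>))"
proof -
  define k where "k = (m - 1) / m"
  have "- (m - 1) / m = - k" unfolding k_def by (rule minus_divide_left[symmetric])
  then show ?thesis
    unfolding integral_eq_pohozaev_energy_diff[OF assms] pohozaev_energy_def u_s0 k_def[symmetric]
    by (simp add: algebra_simps)
qed

end

theorem lemma3p2:
  fixes N :: nat and m \<alpha> \<beta> lam p :: real
  assumes "N \<ge> 1" and "m > 1"
    and "real N + \<alpha> - m > 0" and "\<beta> - \<alpha> + 1 > 0"
    and "lam > 0" and "p > m - 1"
  defines "\<rho> \<equiv> (real N + \<alpha> - m) / (m - 1)"
  shows "(\<exists>C1>0. \<exists>C2>0. \<forall>s0 u u'. s0 \<ge> 0 \<and> positive_solution N m \<alpha> \<beta> lam p s0 u u' \<longrightarrow>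
            (\<forall>r>s0. r powr (N + \<beta>) * u r powr (p + 1) \<le>
               (if N + \<beta> \<noteq> \<rho> * p
                then C1 * r powr (- (m * (N + \<beta>) - (N + \<alpha> - m) * (p + 1)) / (p - m + 1))
                else C2 * r powr (- ((N + \<alpha> - m) * (p + 1) - (m - 1) * (N + \<beta>)) / (m - 1)))))
       \<and> (\<forall>s0 u u'. s0 \<ge> 0 \<and> positive_solution N m \<alpha> \<beta> lam p s0 u u' \<longrightarrow>
            (\<forall>r>s0.
              lam * ((N + \<beta>) / (p + 1) - (N + \<alpha> - m) / m) *
                integral {s0..r} (\<lambda>s. s powr (N + \<beta> - 1) * u s powr (p + 1))
              = - (m - 1) / m * r powr (N + \<alpha> - 1) * \<bar>u' r\<bar> powr (m - 1) * (r * u' r + \<rho> * u r)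
                + (m - 1) / m * s0 powr (N + \<alpha> - 1) * \<bar>u' s0\<bar> powr (m - 1) * (s0 * u' s0 + \<rho> * u s0)
                + lam / (p + 1) * (r powr (N + \<beta>) * u r powr (p + 1) - s0 powr (N + \<beta>))))"
proof -
  interpret L: weighted_lane_emden N m \<alpha> \<beta> lam p
    using assms by unfold_locales simp_all
  have solution: "weighted_lane_emden_solution N m \<alpha> \<beta> lam p s0 u u'"
    if "s0 \<ge> 0 \<and> positive_solution N m \<alpha> \<beta> lam p s0 u u'" for s0 u u'
    using that by unfold_locales simp_all
  show ?thesis
    unfolding \<rho>_def L.\<rho>_def[symmetric]
    using weighted_lane_emden_solution.weighted_power_bound[OF solution]
      weighted_lane_emden_solution.pohozaev_identity[OF solution] L.decay_bound_pos
    by (intro conjI exI[of _ "L.decay_bound powr (p + 1)"] allI impI) auto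
qed

end
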